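(* Let $k\ge2$ be an integer, let $g$ be the function (defined in the context) associated with a feasible solution $\bar\pi$, with $\bar\pi_1\ge\dots\ge\bar\pi_p$, of the dual fractional bin packing LP of some 1D bin packing instance with distinct sizes $s_1>\dots>s_p$ in $(0,1]$. For any finite list $L$ of boxes in $[0,1]^3$, writing $W(L)=\sum_{R\in L} f_k(l(R))\,g(w(R))\,h(R)$, we have $W(L)\le T_k\cdot OPT(L)$.
   Context: 3D strip packing: boxes $R=(l(R),w(R),h(R))$ (length, width, height), all sides at most 1, packed orthogonally without rotation or overlap into a strip of length 1, width 1 and unlimited height; $OPT(L)$ is the minimum height needed. Weighting function: $f_k(x)=\frac1t$ if $\frac1{t+1}<x\le\frac1t$ with $1\le t<k$, $f_k(x)=\frac{kx}{k-1}$ if $0<x\le\frac1k$, and $f_k(0)=0$. Let $t_1=1$, $t_{i+1}=t_i(t_i+1)$, $m(k)$ the integer with $t_{m(k)}<k\le t_{m(k)+1}$, and $T_k=\sum_{i=1}^{m(k)}\frac1{t_i}+\frac1{t_{m(k)+1}}\cdot\frac{k}{k-1}$. Dual fractional bin packing LP: for sizes $s_1>\dots>s_p$ with multiplicities $n_j$, a feasible pattern is a nonnegative integer vector $v$ with $\sum_j v_js_j\le1$; the dual is: maximize $\sum_jn_j\pi_j$ s.t. $\sum_jv_j\pi_j\le1$ for all feasible patterns $v$, $\pi\ge0$. Given such a feasible $\bar\pi$ with $\bar\pi_1\ge\dots\ge\bar\pi_p$, set $\bar\pi_{p+1}=0$, $s_0=1$, $s_{p+1}=0$ and $g(0)=0$,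 $g(x)=\bar\pi_j$ for $x\in[s_j,s_{j-1})$, and $g(1)=\bar\pi_1$. *)

theory Defs
  imports Complex_Main
begin

type_synonym box = "real \<times> real \<times> real"

definition blen :: "box \<Rightarrow> real" where "blen R = fst R"
definition bwid :: "box \<Rightarrow> real" where "bwid R = fst (snd R)"
definition bhgt :: "box \<Rightarrow> real" where "bhgt R = snd (snd R)"

text \<open>A placement assigns to the i-th box of L its corner (x,y,z).
  It is a packing into the strip [0,1] x [0,1] x [0,inf) if every box lies in the
  strip and interiors of distinct boxes are disjoint (no rotation).\<close>
definition is_packing :: "box list \<Rightarrow> (nat \<Rightarrow> real \<times> real \<times> real) \<Rightarrow> bool" where
  "is_packing L pos \<longleftrightarrow>
     (\<forall>i<length L. 0 \<le> fst (pos i) \<and> fst (pos i) + blen (L!i) \<le> 1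
        \<and> 0 \<le> fst (snd (pos i)) \<and> fst (snd (pos i)) + bwid (L!i) \<le> 1
        \<and> 0 \<le> snd (snd (pos i))) \<and>
     (\<forall>i<length L. \<forall>j<length L. i \<noteq> j \<longrightarrow>
        fst (pos i) + blen (L!i) \<le> fst (pos j) \<or> fst (pos j) + blen (L!j) \<le> fst (pos i) \<or>
        fst (snd (pos i)) + bwid (L!i) \<le> fst (snd (pos j)) \<or>
        fst (snd (pos j)) + bwid (L!j) \<le> fst (snd (pos i)) \<or>
        snd (snd (pos i)) + bhgt (L!i) \<le> snd (snd (pos j)) \<or>
        snd (snd (pos j)) + bhgt (L!j) \<le> snd (snd (pos i)))"

definition OPT :: "box list \<Rightarrow> real" where
  "OPT L = Inf {H. 0 \<le> H \<and> (\<exists>pos. is_packing L pos \<and>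
                  (\<forall>i<length L. snd (snd (pos i)) + bhgt (L!i) \<le> H))}"

definition fk :: "nat \<Rightarrow> real \<Rightarrow> real" where
  "fk k x = (if x = 0 then 0
             else if x \<le> 1 / real k then real k * x / (real k - 1)
             else 1 / real (THE t::nat. 1 \<le> t \<and> t < k \<and> 1 / real (t+1) < x \<and> x \<le> 1 / real t))"

text \<open>The sequence t_1 = 1, t_(i+1) = t_i (t_i + 1) (1-indexed; index 0 is a dummy).\<close>
fun tseq :: "nat \<Rightarrow> nat" where
  "tseq 0 = 0"
| "tseq (Suc 0) = 1"
| "tseq (Suc (Suc i)) = tseq (Suc i) * (tseq (Suc i) + 1)"

definition mk :: "nat \<Rightarrow> nat" where
  "mk k = (THE m. 1 \<le> m \<and> tseq m < k \<and> k \<le> tseq (m+1))"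

definition Tk :: "nat \<Rightarrow> real" where
  "Tk k = (\<Sum>i=1..mk k. 1 / real (tseq i)) + 1 / real (tseq (mk k + 1)) * (real k / (real k - 1))"

definition dual_feasible :: "nat \<Rightarrow> (nat \<Rightarrow> real) \<Rightarrow> (nat \<Rightarrow> real) \<Rightarrow> bool" where
  "dual_feasible p s \<pi> \<longleftrightarrow>
     (\<forall>j\<in>{1..p}. 0 \<le> \<pi> j) \<and>
     (\<forall>v::nat \<Rightarrow> nat. (\<Sum>j=1..p. real (v j) * s j) \<le> 1 \<longrightarrow> (\<Sum>j=1..p. real (v j) * \<pi> j) \<le> 1)"

definition sext :: "nat \<Rightarrow> (nat \<Rightarrow> real) \<Rightarrow> nat \<Rightarrow> real" where
  "sext p s j = (if j = 0 then 1 else if j \<le> p then s j else 0)"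
definition piext :: "nat \<Rightarrow> (nat \<Rightarrow> real) \<Rightarrow> nat \<Rightarrow> real" where
  "piext p \<pi> j = (if j \<le> p then \<pi> j else 0)"

definition gfun :: "nat \<Rightarrow> (nat \<Rightarrow> real) \<Rightarrow> (nat \<Rightarrow> real) \<Rightarrow> real \<Rightarrow> real" where
  "gfun p s \<pi> x = (if x = 0 then 0 else if x = 1 then \<pi> 1
     else piext p \<pi> (THE j. 1 \<le> j \<and> j \<le> p + 1 \<and> sext p s j \<le> x \<and> x < sext p s (j - 1)))"

definition Wt :: "nat \<Rightarrow> nat \<Rightarrow> (nat \<Rightarrow> real) \<Rightarrow> (nat \<Rightarrow> real) \<Rightarrow> box list \<Rightarrow> real" where
  "Wt k p s \<pi> L = sum_list (map (\<lambda>R. fk k (blen R) * gfun p s \<pi> (bwid R) * bhgt R) L)"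

end

theory Submission
  imports Defs
begin

text \<open>
  Cut a packing of height H by horizontal planes. The boxes crossing height z form a packing
  of the unit square, and it suffices that each such layer has weight at most T_k: integrating
  the layer weight over 0 < z < H gives W(L) <= T_k H.

  Inside a layer, the boxes met by a vertical line x are separated in the y-direction, so their
  widths sum to at most 1 and, by dual feasibility, their g-values sum to at most 1. The weights
  g(w) therefore form a fractional packing of the x-intervals, and for intervals a fractional
  packing is no better than an integral one: the best weight D(x) of a disjoint subfamily lying
  right of x drops by at least f_k(l) across an interval of length l. Finally a disjoint family
  of x-intervals has total length at most 1, and the classical harmonic bound gives
  sum f_k(l) <= T_k.
\<close>

abbreviation disjoint_intervals :: "('i \<Rightarrow> real) \<Rightarrow> ('i \<Rightarrow> real) \<Rightarrow> 'i set \<Rightarrow> bool" where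
  "disjoint_intervals a b J \<equiv> pairwise (\<lambda>i j. b i \<le> a j \<or> b j \<le> a i) J"

lemma weighted_decrease_le_max_load_no_breakpoints:
  fixes D :: "real \<Rightarrow> real"
  assumes "finite I" and "\<forall>i\<in>I. 0 \<le> c i" and "antimono D"
    and rng: "\<forall>i\<in>I. A \<le> a i \<and> a i \<le> b i \<and> b i \<le> B" and "A \<le> B"
    and load: "\<forall>x. A < x \<longrightarrow> x < B \<longrightarrow> (\<Sum>i\<in>{i\<in>I. a i < x \<and> x < b i}. c i) \<le> T"
    and no_breakpoints: "(a ` I \<union> b ` I) \<inter> {A<..<B} = {}"
  shows "(\<Sum>i\<in>I. c i * (D (a i) - D (b i))) \<le> T * (D A - D B)"
proof (cases "A = B")
  case True
  then have "\<forall>i\<in>I. a i = b i" using rng by force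
  then show ?thesis using True by simp
next
  case False
  define m where "m = (A + B) / 2"
  have m: "A < m" "m < B" using False \<open>A \<le> B\<close> unfolding m_def by auto
  have ends: "(a i = A \<or> a i = B) \<and> (b i = A \<or> b i = B)" if "i \<in> I" for i
    using no_breakpoints rng that by fastforce
  have "(\<Sum>i\<in>I. c i * (D (a i) - D (b i)))
      = (\<Sum>i\<in>I. if a i < m \<and> m < b i then c i * (D A - D B) else 0)"
    using ends m rng by (intro sum.cong) fastforce+
  also have "\<dots> = (\<Sum>i\<in>{i\<in>I. a i < m \<and> m < b i}. c i) * (D A - D B)"
    by (simp add: sum.If_cases \<open>finite I\<close> sum_distrib_right Int_def conj_commute)
  also have "\<dots> \<le> T * (D A - D B)"
    using load m \<open>antimono D\<close> \<open>A \<le> B\<close> by (intro mult_right_mono) (auto simp: antimono_def)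
  finally show ?thesis .
qed

definition clamp :: "real \<Rightarrow> real \<Rightarrow> real \<Rightarrow> real" where
  "clamp lo hi x = max lo (min x hi)"

lemma clamped_family:
  fixes a b c :: "'i \<Rightarrow> real"
  assumes rng: "\<forall>i\<in>I. A \<le> a i \<and> a i \<le> b i \<and> b i \<le> B" and "A \<le> lo" and "lo \<le> hi" and "hi \<le> B"
    and load: "\<forall>x. A < x \<longrightarrow> x < B \<longrightarrow> (\<Sum>i\<in>{i\<in>I. a i < x \<and> x < b i}. c i) \<le> T"
  shows "\<forall>i\<in>I. lo \<le> clamp lo hi (a i) \<and> clamp lo hi (a i) \<le> clamp lo hi (b i) \<and> clamp lo hi (b i) \<le> hi"
    and "\<forall>x. lo < x \<longrightarrow> x < hi \<longrightarrow>
      (\<Sum>i\<in>{i\<in>I. clamp lo hi (a i) < x \<and> x < clamp lo hi (b i)}. c i) \<le> T"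
    and "((\<lambda>i. clamp lo hi (a i)) ` I \<union> (\<lambda>i. clamp lo hi (b i)) ` I) \<inter> {lo<..<hi}
      \<subseteq> (a ` I \<union> b ` I) \<inter> {lo<..<hi}"
proof -
  show "\<forall>i\<in>I. lo \<le> clamp lo hi (a i) \<and> clamp lo hi (a i) \<le> clamp lo hi (b i) \<and> clamp lo hi (b i) \<le> hi"
    using rng \<open>lo \<le> hi\<close> by (auto simp: clamp_def)
  show "\<forall>x. lo < x \<longrightarrow> x < hi \<longrightarrow>
      (\<Sum>i\<in>{i\<in>I. clamp lo hi (a i) < x \<and> x < clamp lo hi (b i)}. c i) \<le> T"
  proof (intro allI impI)
    fix x assume "lo < x" "x < hi"
    then have "{i\<in>I. clamp lo hi (a i) < x \<and> x < clamp lo hi (b i)} = {i\<in>I. a i < x \<and> x < b i}"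
      by (auto simp: clamp_def)
    then show "(\<Sum>i\<in>{i\<in>I. clamp lo hi (a i) < x \<and> x < clamp lo hi (b i)}. c i) \<le> T"
      using load \<open>lo < x\<close> \<open>x < hi\<close> \<open>A \<le> lo\<close> \<open>hi \<le> B\<close> by auto
  qed
  have fixed: "clamp lo hi v = v" if "clamp lo hi v \<in> {lo<..<hi}" for v
    using that by (auto simp: clamp_def)
  show "((\<lambda>i. clamp lo hi (a i)) ` I \<union> (\<lambda>i. clamp lo hi (b i)) ` I) \<inter> {lo<..<hi}
      \<subseteq> (a ` I \<union> b ` I) \<inter> {lo<..<hi}"
  proof
    fix y assume y: "y \<in> ((\<lambda>i. clamp lo hi (a i)) ` I \<union> (\<lambda>i. clamp lo hi (b i)) ` I) \<inter> {lo<..<hi}"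
    then obtain v where "v \<in> a ` I \<union> b ` I" and "y = clamp lo hi v" by blast
    with y fixed[of v] show "y \<in> (a ` I \<union> b ` I) \<inter> {lo<..<hi}" by simp
  qed
qed

lemma clamp_split_decrease:
  fixes D :: "real \<Rightarrow> real"
  assumes "A \<le> u" and "u \<le> v" and "v \<le> B" and "A \<le> e" and "e \<le> B"
  shows "D u - D v = (D (clamp A e u) - D (clamp A e v)) + (D (clamp e B u) - D (clamp e B v))"
  using assms by (cases "v \<le> e"; cases "u \<le> e") (auto simp: clamp_def)

lemma weighted_decrease_le_max_load_cut_points:
  fixes D :: "real \<Rightarrow> real"
  assumes "finite I" and "\<forall>i\<in>I. 0 \<le> c i" and "antimono D" and "finite P"
  shows "(a ` I \<union> b ` I) \<inter> {A<..<B} \<subseteq> P \<Longrightarrow>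
    \<forall>i\<in>I. A \<le> a i \<and> a i \<le> b i \<and> b i \<le> B \<Longrightarrow> A \<le> B \<Longrightarrow>
    \<forall>x. A < x \<longrightarrow> x < B \<longrightarrow> (\<Sum>i\<in>{i\<in>I. a i < x \<and> x < b i}. c i) \<le> T \<Longrightarrow>
    (\<Sum>i\<in>I. c i * (D (a i) - D (b i))) \<le> T * (D A - D B)"
  using \<open>finite P\<close>
proof (induction P arbitrary: A B a b rule: finite_induct)
  case empty
  then show ?case
    by (intro weighted_decrease_le_max_load_no_breakpoints[OF assms(1-3)]) auto
next
  case (insert e P)
  show ?case
  proof (cases "e \<in> {A<..<B}")
    case False
    then have "(a ` I \<union> b ` I) \<inter> {A<..<B} \<subseteq> P" using insert.prems(1) by blast
    from insert.IH[OF this insert.prems(2-4)] show ?thesis .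
  next
    case True
    have half: "(\<Sum>i\<in>I. c i * (D (clamp lo hi (a i)) - D (clamp lo hi (b i)))) \<le> T * (D lo - D hi)"
      if "A \<le> lo" and "lo \<le> hi" and "hi \<le> B" and "e \<notin> {lo<..<hi}" for lo hi
    proof -
      note clamped = clamped_family[OF insert.prems(2) that(1-3) insert.prems(4)]
      have "(a ` I \<union> b ` I) \<inter> {lo<..<hi} \<subseteq> P"
      proof
        fix y assume "y \<in> (a ` I \<union> b ` I) \<inter> {lo<..<hi}"
        then have "y \<in> (a ` I \<union> b ` I) \<inter> {A<..<B}" and "y \<noteq> e" using that by auto
        then show "y \<in> P" using insert.prems(1) by blast
      qed
      with clamped(3) have "((\<lambda>i. clamp lo hi (a i)) ` I \<union> (\<lambda>i. clamp lo hi (b i)) ` I) \<inter> {lo<..<hi} \<subseteq> P"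
        by (rule subset_trans)
      from insert.IH[OF this clamped(1) \<open>lo \<le> hi\<close> clamped(2)] show ?thesis .
    qed
    have "(\<Sum>i\<in>I. c i * (D (a i) - D (b i)))
        = (\<Sum>i\<in>I. c i * (D (clamp A e (a i)) - D (clamp A e (b i))))
          + (\<Sum>i\<in>I. c i * (D (clamp e B (a i)) - D (clamp e B (b i))))"
      using clamp_split_decrease[of A _ _ B e D] insert.prems(2) True
      by (simp add: distrib_left sum.distrib[symmetric])
    also have "\<dots> \<le> T * (D A - D e) + T * (D e - D B)"
      using half[of A e] half[of e B] True by (intro add_mono) auto
    finally show ?thesis by (simp add: algebra_simps)
  qed
qed

text \<open>A discrete layer-cake inequality: for differentiable D both sides are integrals of -D',
  against the load of the family and against its bound T.\<close>

lemma weighted_decrease_le_max_load: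
  fixes D :: "real \<Rightarrow> real"
  assumes "finite I" and "\<forall>i\<in>I. 0 \<le> c i" and "antimono D"
    and "\<forall>i\<in>I. A \<le> a i \<and> a i \<le> b i \<and> b i \<le> B" and "A \<le> B"
    and "\<forall>x. A < x \<longrightarrow> x < B \<longrightarrow> (\<Sum>i\<in>{i\<in>I. a i < x \<and> x < b i}. c i) \<le> T"
  shows "(\<Sum>i\<in>I. c i * (D (a i) - D (b i))) \<le> T * (D A - D B)"
proof -
  have "finite (a ` I \<union> b ` I)" using \<open>finite I\<close> by simp
  from weighted_decrease_le_max_load_cut_points[OF assms(1-3) this Int_lower1 assms(4-6)]
  show ?thesis .
qed

lemma weighted_length_le_max_load:
  fixes a b c :: "'i \<Rightarrow> real"
  assumes "finite I" and "\<forall>i\<in>I. 0 \<le> c i"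
    and "\<forall>i\<in>I. A \<le> a i \<and> a i \<le> b i \<and> b i \<le> B" and "A \<le> B"
    and "\<forall>x. A < x \<longrightarrow> x < B \<longrightarrow> (\<Sum>i\<in>{i\<in>I. a i < x \<and> x < b i}. c i) \<le> T"
  shows "(\<Sum>i\<in>I. c i * (b i - a i)) \<le> T * (B - A)"
proof -
  have "antimono (uminus :: real \<Rightarrow> real)" by (simp add: antimono_def)
  from weighted_decrease_le_max_load[OF assms(1,2) this assms(3-5)] show ?thesis
    by (simp add: algebra_simps)
qed

lemma disjoint_intervals_length_le:
  fixes a b :: "'i \<Rightarrow> real"
  assumes "finite J" and "\<forall>i\<in>J. A \<le> a i \<and> a i \<le> b i \<and> b i \<le> B" and "A \<le> B"
    and "disjoint_intervals a b J"
  shows "(\<Sum>i\<in>J. b i - a i) \<le> B - A"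
proof -
  have "card {i\<in>J. a i < x \<and> x < b i} \<le> Suc 0" for x
    using \<open>disjoint_intervals a b J\<close> \<open>finite J\<close>
    by (subst card_le_Suc0_iff_eq) (auto simp: pairwise_def, fastforce)
  then show ?thesis
    using weighted_length_le_max_load[OF assms(1) _ assms(2,3), of "\<lambda>_. 1" 1] by simp
qed

definition max_disjoint_weight ::
    "'i set \<Rightarrow> ('i \<Rightarrow> real) \<Rightarrow> ('i \<Rightarrow> real) \<Rightarrow> ('i \<Rightarrow> real) \<Rightarrow> real \<Rightarrow> real" where
  "max_disjoint_weight I a b \<phi> x =
     Max (sum \<phi> ` {J. J \<subseteq> I \<and> disjoint_intervals a b J \<and> (\<forall>i\<in>J. x \<le> a i)})"

lemma finite_disjoint_subfamilies:
  "finite I \<Longrightarrow> finite {J. J \<subseteq> I \<and> disjoint_intervals a b J \<and> (\<forall>i\<in>J. x \<le> a i)}"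
  by (rule finite_subset[of _ "Pow I"]) auto

lemma max_disjoint_weight_ge:
  assumes "finite I" and "J \<subseteq> I" and "disjoint_intervals a b J" and "\<forall>i\<in>J. x \<le> a i"
  shows "sum \<phi> J \<le> max_disjoint_weight I a b \<phi> x"
  unfolding max_disjoint_weight_def
  using assms finite_disjoint_subfamilies[OF assms(1)] by (intro Max_ge) auto

lemma max_disjoint_weight_attained:
  assumes "finite I"
  obtains J where "J \<subseteq> I" and "disjoint_intervals a b J" and "\<forall>i\<in>J. x \<le> a i"
    and "max_disjoint_weight I a b \<phi> x = sum \<phi> J"
proof -
  let ?F = "{J. J \<subseteq> I \<and> disjoint_intervals a b J \<and> (\<forall>i\<in>J. x \<le> a i)}"
  have "{} \<in> ?F" by simp
  then have "sum \<phi> ` ?F \<noteq> {}" by blast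
  then have "max_disjoint_weight I a b \<phi> x \<in> sum \<phi> ` ?F"
    unfolding max_disjoint_weight_def
    using Max_in[OF finite_imageI[OF finite_disjoint_subfamilies[OF assms]]] by blast
  then obtain J where "J \<in> ?F" and "max_disjoint_weight I a b \<phi> x = sum \<phi> J" by blast
  with that show ?thesis by blast
qed

lemma max_disjoint_weight_antimono:
  assumes "finite I"
  shows "antimono (max_disjoint_weight I a b \<phi>)"
proof (rule antimonoI)
  fix x y :: real assume "x \<le> y"
  obtain J where J: "J \<subseteq> I" "disjoint_intervals a b J" "\<forall>i\<in>J. y \<le> a i"
    and opt: "max_disjoint_weight I a b \<phi> y = sum \<phi> J"
    using max_disjoint_weight_attained[OF assms] .
  have "\<forall>i\<in>J. x \<le> a i" using J(3) \<open>x \<le> y\<close> by (blast intro: order_trans)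
  with max_disjoint_weight_ge[OF assms J(1,2)] opt
  show "max_disjoint_weight I a b \<phi> y \<le> max_disjoint_weight I a b \<phi> x" by simp
qed

lemma max_disjoint_weight_step:
  assumes "finite I" and "i \<in> I" and "a i < b i"
  shows "\<phi> i + max_disjoint_weight I a b \<phi> (b i) \<le> max_disjoint_weight I a b \<phi> (a i)"
proof -
  obtain J where J: "J \<subseteq> I" "disjoint_intervals a b J" "\<forall>j\<in>J. b i \<le> a j"
    and opt: "max_disjoint_weight I a b \<phi> (b i) = sum \<phi> J"
    using max_disjoint_weight_attained[OF assms(1)] .
  have "i \<notin> J" using J(3) assms(3) by (meson not_le)
  have "finite J" using J(1) assms(1) by (rule finite_subset)
  have "sum \<phi> (insert i J) \<le> max_disjoint_weight I a b \<phi> (a i)"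
  proof (rule max_disjoint_weight_ge[OF assms(1)])
    show "insert i J \<subseteq> I" using J(1) assms(2) by simp
    show "disjoint_intervals a b (insert i J)"
      using J(2,3) by (simp add: pairwise_insert)
    show "\<forall>j\<in>insert i J. a i \<le> a j"
      using J(3) assms(3) by (auto intro: order_trans less_imp_le)
  qed
  with \<open>i \<notin> J\<close> \<open>finite J\<close> opt show ?thesis by simp
qed

lemma fractional_disjoint_intervals_bound:
  fixes a b c \<phi> :: "'i \<Rightarrow> real"
  assumes "finite I" and rng: "\<forall>i\<in>I. A \<le> a i \<and> a i \<le> b i \<and> b i \<le> B" and "A \<le> B"
    and c: "\<forall>i\<in>I. 0 \<le> c i"
    and load: "\<forall>x. A < x \<longrightarrow> x < B \<longrightarrow> (\<Sum>i\<in>{i\<in>I. a i < x \<and> x < b i}. c i) \<le> 1"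
    and degenerate: "\<forall>i\<in>I. a i = b i \<longrightarrow> \<phi> i \<le> 0"
    and integral: "\<And>J. J \<subseteq> I \<Longrightarrow> disjoint_intervals a b J \<Longrightarrow> sum \<phi> J \<le> T"
  shows "(\<Sum>i\<in>I. c i * \<phi> i) \<le> T"
proof -
  define D where "D = max_disjoint_weight I a b \<phi>"
  have step: "\<phi> i \<le> D (a i) - D (b i)" if "i \<in> I" for i
  proof (cases "a i = b i")
    case True
    then show ?thesis using degenerate that by simp
  next
    case False
    moreover have "a i \<le> b i" using rng that by blast
    ultimately have "a i < b i" by simp
    from max_disjoint_weight_step[of I i a b \<phi>, OF \<open>finite I\<close> that this] show ?thesis
      unfolding D_def by simp
  qed
  have "(\<Sum>i\<in>I. c i * \<phi> i) \<le> (\<Sum>i\<in>I. c i * (D (a i) - D (b i)))"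
    using c step by (intro sum_mono mult_left_mono) auto
  also have "\<dots> \<le> 1 * (D A - D B)"
  proof (rule weighted_decrease_le_max_load[OF \<open>finite I\<close> c _ rng \<open>A \<le> B\<close> load])
    show "antimono D" unfolding D_def by (rule max_disjoint_weight_antimono[OF \<open>finite I\<close>])
  qed
  also have "\<dots> \<le> T"
  proof -
    obtain J where J: "J \<subseteq> I" "disjoint_intervals a b J" "\<forall>i\<in>J. A \<le> a i"
      and "max_disjoint_weight I a b \<phi> A = sum \<phi> J"
      by (rule max_disjoint_weight_attained[OF \<open>finite I\<close>])
    then have "D A \<le> T" using integral[OF J(1,2)] unfolding D_def by simp
    moreover have "0 \<le> D B"
      using max_disjoint_weight_ge[OF \<open>finite I\<close>, of "{}"] unfolding D_def by simp
    ultimately show ?thesis by simp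
  qed
  finally show ?thesis .
qed

lemma tseq_Suc: "1 \<le> j \<Longrightarrow> tseq (Suc j) = tseq j * (tseq j + 1)"
  by (cases j) auto

lemma tseq_pos: "1 \<le> j \<Longrightarrow> 1 \<le> tseq j"
  by (induction j rule: tseq.induct) auto

lemma tseq_mono: "mono tseq"
  unfolding mono_iff_le_Suc
proof
  show "tseq n \<le> tseq (Suc n)" for n by (cases n) auto
qed

lemma tseq_ge_self: "j \<le> tseq j"
proof (induction j rule: tseq.induct)
  case (3 i)
  then have "Suc (Suc i) \<le> tseq (Suc i) + 1" by simp
  also have "\<dots> \<le> tseq (Suc i) * (tseq (Suc i) + 1)" using tseq_pos[of "Suc i"] by simp
  finally show ?case by simp
qed auto

lemma mk_bounds:
  assumes "2 \<le> k"
  shows "1 \<le> mk k" and "tseq (mk k) < k" and "k \<le> tseq (mk k + 1)"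
proof -
  define n where "n = (LEAST n. k \<le> tseq n)"
  have n: "k \<le> tseq n" unfolding n_def by (rule LeastI[of _ k]) (rule tseq_ge_self)
  then have "2 \<le> n" using assms by (cases n rule: tseq.cases) auto
  moreover have "\<not> k \<le> tseq (n - 1)"
    using \<open>2 \<le> n\<close> not_less_Least[of "n - 1" "\<lambda>n. k \<le> tseq n"] unfolding n_def by simp
  ultimately have m: "1 \<le> n - 1 \<and> tseq (n - 1) < k \<and> k \<le> tseq (n - 1 + 1)"
    using n by simp
  have "mk k = n - 1" unfolding mk_def
  proof (rule the_equality)
    show "1 \<le> n - 1 \<and> tseq (n - 1) < k \<and> k \<le> tseq (n - 1 + 1)" by (rule m)
  next
    fix m' assume m': "1 \<le> m' \<and> tseq m' < k \<and> k \<le> tseq (m' + 1)"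
    have "\<not> m' + 1 \<le> n - 1" and "\<not> n \<le> m'"
      using m m' monoD[OF tseq_mono, of "m' + 1" "n - 1"] monoD[OF tseq_mono, of n m'] by auto
    then show "m' = n - 1" by linarith
  qed
  then show "1 \<le> mk k" "tseq (mk k) < k" "k \<le> tseq (mk k + 1)" using m by simp_all
qed

lemma mk_eq_if_le_tseq_Suc:
  assumes "2 \<le> k" and "n \<le> mk k" and "k \<le> tseq (Suc n)"
  shows "n = mk k"
proof (rule ccontr)
  assume "n \<noteq> mk k"
  with assms(2) have "tseq (Suc n) \<le> tseq (mk k)" by (intro monoD[OF tseq_mono]) simp
  with assms(3) mk_bounds(2)[OF assms(1)] show False by simp
qed

lemma fk_eq_linear: "0 \<le> x \<Longrightarrow> x \<le> 1 / real k \<Longrightarrow> fk k x = real k * x / (real k - 1)"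
  unfolding fk_def by auto

lemma fk_eq_inverse:
  assumes "1 \<le> t" and "t < k" and "1 / real (t + 1) < x" and "x \<le> 1 / real t"
  shows "fk k x = 1 / real t"
proof -
  have "1 / real k \<le> 1 / real (t + 1)" using assms(1,2) by (intro divide_left_mono) auto
  then have "x \<noteq> 0" and "\<not> x \<le> 1 / real k"
    using assms(3) by (auto simp: not_le order_le_less_trans[of 0 "1 / real (t + 1)"])
  moreover have "(THE t. 1 \<le> t \<and> t < k \<and> 1 / real (t + 1) < x \<and> x \<le> 1 / real t) = t"
  proof (rule the_equality)
    fix t' assume t': "1 \<le> t' \<and> t' < k \<and> 1 / real (t' + 1) < x \<and> x \<le> 1 / real t'"
    have "\<not> t' + 1 \<le> t" and "\<not> t + 1 \<le> t'"
      using assms t' divide_left_mono[of "real (t' + 1)" "real t" 1]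
        divide_left_mono[of "real (t + 1)" "real t'" 1] by auto
    then show "t' = t" by linarith
  qed (use assms in simp)
  ultimately show ?thesis unfolding fk_def by simp
qed

lemma harmonic_class_exists:
  assumes "2 \<le> k" and "1 / real k < x" and "x \<le> 1"
  obtains t where "1 \<le> t" and "t < k" and "1 / real (t + 1) < x" and "x \<le> 1 / real t"
proof
  have "0 < real k" using assms(1) by simp
  have "0 < x" using assms(2) order_le_less_trans[of 0 "1 / real k" x] by simp
  have "1 \<le> 1 / x" using \<open>0 < x\<close> assms(3) by simp
  have "1 < x * real k" using assms(2) \<open>0 < real k\<close> by (simp add: divide_less_eq)
  then have "1 / x < real k" using \<open>0 < x\<close> by (simp add: divide_less_eq mult.commute)
  define t where "t = nat \<lfloor>1 / x\<rfloor>"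
  have t: "real t \<le> 1 / x" "1 / x < real t + 1" unfolding t_def using \<open>1 \<le> 1 / x\<close> by linarith+
  show "1 \<le> t" unfolding t_def using \<open>1 \<le> 1 / x\<close> by linarith
  show "t < k" using t \<open>1 / x < real k\<close> by linarith
  show "1 / real (t + 1) < x"
    using t \<open>0 < x\<close> by (simp add: divide_simps mult.commute add.commute)
  show "x \<le> 1 / real t"
    using t \<open>0 < x\<close> \<open>1 \<le> t\<close> by (simp add: divide_simps mult.commute)
qed

lemma fk_nonneg:
  assumes "2 \<le> k" and "0 \<le> x" and "x \<le> 1"
  shows "0 \<le> fk k x"
proof (cases "x \<le> 1 / real k")
  case True
  then show ?thesis using fk_eq_linear assms by simp
next
  case False
  then have "1 / real k < x" by simp
  then obtain t where "1 \<le> t" "t < k" "1 / real (t + 1) < x" "x \<le> 1 / real t"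
    using harmonic_class_exists[OF assms(1) _ assms(3)] by blast
  then show ?thesis using fk_eq_inverse by simp
qed

lemma fk_le_ratio:
  assumes "2 \<le> k" and "1 \<le> u" and "u < k" and "0 \<le> x" and "x \<le> 1 / real u"
  shows "fk k x \<le> (real u + 1) / real u * x"
proof (cases "x \<le> 1 / real k")
  case True
  have "real k / (real k - 1) \<le> (real u + 1) / real u"
    using assms(2,3) by (simp add: field_simps)
  from mult_right_mono[OF this assms(4)] show ?thesis
    using fk_eq_linear[OF assms(4) True] by simp
next
  case False
  have "x \<le> 1" using assms(2,5) order_trans[of x "1 / real u" 1] by simp
  moreover have "1 / real k < x" using False by simp
  ultimately obtain t where t: "1 \<le> t" "t < k" "1 / real (t + 1) < x" "x \<le> 1 / real t"
    using harmonic_class_exists[OF assms(1)] by blast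
  have "u \<le> t"
  proof (rule ccontr)
    assume "\<not> u \<le> t"
    then have "1 / real u \<le> 1 / real (t + 1)" by (intro divide_left_mono) auto
    then show False using t(3) assms(5) by linarith
  qed
  have "1 / real t < (real t + 1) / real t * x"
    using t(1,3) by (simp add: field_simps)
  also have "\<dots> \<le> (real u + 1) / real u * x"
    using \<open>u \<le> t\<close> assms(2,4) by (intro mult_right_mono) (simp_all add: field_simps)
  finally show ?thesis using fk_eq_inverse[OF t] by simp
qed

lemma sum_fk_le_ratio:
  assumes "2 \<le> k" and "1 \<le> u" and "u < k" and "\<forall>i\<in>S. 0 \<le> x i \<and> x i \<le> 1 / real u"
  shows "(\<Sum>i\<in>S. fk k (x i)) \<le> (real u + 1) / real u * (\<Sum>i\<in>S. x i)"
  unfolding sum_distrib_left using fk_le_ratio[OF assms(1-3)] assms(4) by (intro sum_mono) auto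

definition Tk_tail :: "nat \<Rightarrow> nat \<Rightarrow> real" where
  "Tk_tail k j = (\<Sum>i=j..mk k. 1 / real (tseq i)) + 1 / real (tseq (mk k + 1)) * (real k / (real k - 1))"

lemma Tk_eq_tail: "Tk k = Tk_tail k 1"
  unfolding Tk_def Tk_tail_def ..

lemma Tk_tail_Suc: "j \<le> mk k \<Longrightarrow> Tk_tail k j = 1 / real (tseq j) + Tk_tail k (Suc j)"
  unfolding Tk_tail_def by (simp add: sum.atLeast_Suc_atMost)

lemma Tk_tail_last: "Tk_tail k (mk k + 1) = real k / (real k - 1) * (1 / real (tseq (mk k + 1)))"
  unfolding Tk_tail_def by simp

lemma Tk_tail_ge:
  assumes "2 \<le> k" and "1 \<le> j" and "j \<le> mk k + 1"
  shows "1 / real (tseq j) \<le> Tk_tail k j"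
proof (cases "j \<le> mk k")
  case True
  have "1 / real (tseq j) \<le> (\<Sum>i=j..mk k. 1 / real (tseq i))"
    using True by (intro member_le_sum) auto
  moreover have "0 \<le> 1 / real (tseq (mk k + 1)) * (real k / (real k - 1))"
    using assms(1) by simp
  ultimately show ?thesis unfolding Tk_tail_def by linarith
next
  case False
  then have "j = mk k + 1" using assms(3) by simp
  moreover have "1 \<le> real k / (real k - 1)" using assms(1) by simp
  ultimately show ?thesis
    using Tk_tail_last[of k] mult_right_mono[of 1 "real k / (real k - 1)" "1 / real (tseq j)"] by simp
qed

lemma sum_fk_le_Tk_tail_last:
  assumes "2 \<le> k" and "finite S" and "\<forall>i\<in>S. 0 \<le> x i"
    and "(\<Sum>i\<in>S. x i) \<le> 1 / real (tseq (mk k + 1))"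
  shows "(\<Sum>i\<in>S. fk k (x i)) \<le> Tk_tail k (mk k + 1)"
proof -
  have "1 / real (tseq (mk k + 1)) \<le> 1 / real (k - 1)"
    using mk_bounds(3)[OF assms(1)] assms(1) by (intro frac_le) auto
  then have "x i \<le> 1 / real (k - 1)" if "i \<in> S" for i
    using assms(2-4) member_le_sum[of i S x] that by fastforce
  with assms(3) have "\<forall>i\<in>S. 0 \<le> x i \<and> x i \<le> 1 / real (k - 1)" by blast
  from sum_fk_le_ratio[OF assms(1) _ _ this] assms(1)
  have "(\<Sum>i\<in>S. fk k (x i)) \<le> real k / (real k - 1) * (\<Sum>i\<in>S. x i)"
    by (simp add: of_nat_diff)
  also have "\<dots> \<le> Tk_tail k (mk k + 1)"
    unfolding Tk_tail_last using assms(1,4) by (intro mult_left_mono) auto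
  finally show ?thesis .
qed

lemma sum_fk_small_items_le_Tk_tail:
  assumes "2 \<le> k" and "1 \<le> n" and "n \<le> mk k" and "\<forall>i\<in>S. 0 \<le> x i"
    and "(\<Sum>i\<in>S. x i) \<le> 1 / real (tseq n)"
    and small: "\<forall>i\<in>S. x i \<le> 1 / real (tseq n + 1)"
  shows "(\<Sum>i\<in>S. fk k (x i)) \<le> Tk_tail k n"
proof -
  define t where "t = tseq n"
  have "1 \<le> t" using tseq_pos[OF assms(2)] unfolding t_def .
  have "t < k" using monoD[OF tseq_mono assms(3)] mk_bounds[OF assms(1)] unfolding t_def by simp
  have next_t: "real (tseq (Suc n)) = real t * (real t + 1)"
    using tseq_Suc[OF assms(2)] unfolding t_def by (simp add: algebra_simps)
  have scaled_sum_le: "(real u + 1) / real u * (\<Sum>i\<in>S. x i) \<le> (real u + 1) / real u * (1 / real t)" for u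
    using assms(5) unfolding t_def by (intro mult_left_mono) auto
  show ?thesis
  proof (cases "t + 1 < k")
    case True
    have "\<forall>i\<in>S. 0 \<le> x i \<and> x i \<le> 1 / real (t + 1)"
      using small assms(4) unfolding t_def by simp
    from sum_fk_le_ratio[OF assms(1) _ True this]
    have "(\<Sum>i\<in>S. fk k (x i)) \<le> (real (t + 1) + 1) / real (t + 1) * (\<Sum>i\<in>S. x i)" by simp
    also have "\<dots> \<le> (real (t + 1) + 1) / real (t + 1) * (1 / real t)" by (rule scaled_sum_le)
    also have "\<dots> = 1 / real t + 1 / real (tseq (Suc n))"
      using \<open>1 \<le> t\<close> unfolding next_t by (simp add: divide_simps)
    also have "\<dots> \<le> Tk_tail k n"
      using Tk_tail_Suc[OF assms(3)] Tk_tail_ge[OF assms(1), of "Suc n"] assms(3)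
      unfolding t_def by simp
    finally show ?thesis .
  next
    case False
    then have k: "k = t + 1" using \<open>t < k\<close> by simp
    have "k \<le> tseq (Suc n)" using tseq_Suc[OF assms(2)] \<open>1 \<le> t\<close> k unfolding t_def by simp
    with assms(1,3) have "n = mk k" by (rule mk_eq_if_le_tseq_Suc)
    have "1 / real (t + 1) \<le> 1 / real t" using \<open>1 \<le> t\<close> by (intro frac_le) auto
    then have "\<forall>i\<in>S. 0 \<le> x i \<and> x i \<le> 1 / real t" using small assms(4) unfolding t_def by force
    from sum_fk_le_ratio[OF assms(1) \<open>1 \<le> t\<close> \<open>t < k\<close> this]
    have "(\<Sum>i\<in>S. fk k (x i)) \<le> (real t + 1) / real t * (\<Sum>i\<in>S. x i)" .
    also have "\<dots> \<le> (real t + 1) / real t * (1 / real t)" by (rule scaled_sum_le)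
    also have "\<dots> = 1 / real t + real k / (real k - 1) * (1 / real (tseq (Suc n)))"
      using \<open>1 \<le> t\<close> unfolding next_t k by (simp add: divide_simps) (simp add: algebra_simps)
    also have "\<dots> = Tk_tail k n"
      using Tk_tail_Suc[OF assms(3)] Tk_tail_last[of k] \<open>n = mk k\<close> unfolding t_def by simp
    finally show ?thesis .
  qed
qed

lemma sum_fk_le_Tk_tail:
  assumes "2 \<le> k" and "1 \<le> j" and "j \<le> mk k + 1"
    and "finite S" and "\<forall>i\<in>S. 0 \<le> x i" and "(\<Sum>i\<in>S. x i) \<le> 1 / real (tseq j)"
  shows "(\<Sum>i\<in>S. fk k (x i)) \<le> Tk_tail k j"
  using assms(3,2,4-6)
proof (induction j arbitrary: S rule: inc_induct)
  case base
  then show ?case using sum_fk_le_Tk_tail_last[OF assms(1)] by blast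
next
  case (step n)
  define t where "t = tseq n"
  have le_sum: "x i \<le> 1 / real t" if "i \<in> S" for i
    using step.prems member_le_sum[of i S x] that unfolding t_def by fastforce
  show ?case
  proof (cases "\<exists>i\<in>S. 1 / real (t + 1) < x i")
    case True
    then obtain i where i: "i \<in> S" "1 / real (t + 1) < x i" by blast
    have "1 \<le> t" "t < k"
      using tseq_pos[OF step.prems(1)] monoD[OF tseq_mono, of n "mk k"] step.hyps
        mk_bounds[OF assms(1)] unfolding t_def by auto
    then have "fk k (x i) = 1 / real t"
      using fk_eq_inverse i(2) le_sum[OF i(1)] by blast
    \<comment> \<open>The other items share the room 1/t - 1/(t+1) = 1/tseq (n+1) left by item i.\<close>
    moreover have "(\<Sum>j\<in>S - {i}. x j) \<le> 1 / real (tseq (Suc n))"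
    proof -
      have "1 / real t - 1 / real (t + 1) = 1 / real (tseq (Suc n))"
        using tseq_Suc[OF step.prems(1)] \<open>1 \<le> t\<close> unfolding t_def by (simp add: field_simps)
      then show ?thesis
        using sum.remove[OF step.prems(2) i(1), of x] step.prems(4) i(2) unfolding t_def by linarith
    qed
    then have "(\<Sum>j\<in>S - {i}. fk k (x j)) \<le> Tk_tail k (Suc n)"
      using step.IH step.prems by simp
    ultimately show ?thesis
      using sum.remove[OF step.prems(2) i(1), of "\<lambda>j. fk k (x j)"] Tk_tail_Suc[of n k] step.hyps
      unfolding t_def by simp
  next
    case False
    then show ?thesis
      using sum_fk_small_items_le_Tk_tail[OF assms(1) step.prems(1) _ step.prems(3,4)] step.hyps
      unfolding t_def by (simp add: not_less)
  qed
qed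

lemma sum_fk_le_Tk:
  assumes "2 \<le> k" and "finite S" and "\<forall>i\<in>S. 0 \<le> x i" and "(\<Sum>i\<in>S. x i) \<le> 1"
  shows "(\<Sum>i\<in>S. fk k (x i)) \<le> Tk k"
  using sum_fk_le_Tk_tail[OF assms(1) _ _ assms(2,3)] assms(4) mk_bounds(1)[OF assms(1)]
  unfolding Tk_eq_tail by simp

lemma Tk_ge_1: "2 \<le> k \<Longrightarrow> 1 \<le> Tk k"
  using Tk_tail_ge[of k 1] mk_bounds(1)[of k] unfolding Tk_eq_tail by simp

lemma sum_over_classes:
  fixes J :: "'i \<Rightarrow> nat" and f :: "nat \<Rightarrow> real"
  assumes "finite K" and "finite C" and "J ` K \<subseteq> C"
  shows "(\<Sum>i\<in>K. f (J i)) = (\<Sum>j\<in>C. real (card {i\<in>K. J i = j}) * f j)"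
  using sum.group[OF assms, of "\<lambda>i. f (J i)"] by simp

abbreviation unit_box :: "box \<Rightarrow> bool" where
  "unit_box R \<equiv> 0 \<le> blen R \<and> blen R \<le> 1 \<and> 0 \<le> bwid R \<and> bwid R \<le> 1 \<and> 0 \<le> bhgt R \<and> bhgt R \<le> 1"

locale dual_solution =
  fixes p :: nat and s \<pi> :: "nat \<Rightarrow> real"
  assumes p_pos: "1 \<le> p"
    and sizes: "\<forall>j\<in>{1..p}. 0 < s j \<and> s j \<le> 1"
    and sizes_decreasing: "\<forall>j\<in>{1..<p}. s (j + 1) < s j"
    and feasible: "dual_feasible p s \<pi>"
begin

lemma sext_antimono: "i \<le> j \<Longrightarrow> sext p s j \<le> sext p s i"
proof (induction j rule: dec_induct)
  case (step j)
  have "sext p s (Suc j) \<le> sext p s j"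
    using p_pos sizes[rule_format, of j] sizes[rule_format, of 1] sizes_decreasing[rule_format, of j]
    by (cases "j = 0"; cases "j < p") (auto simp: sext_def)
  then show ?case using step.IH by simp
qed simp

lemma gfun_interior:
  assumes "0 < w" and "w < 1"
  obtains j where "1 \<le> j" and "j \<le> p + 1" and "sext p s j \<le> w" and "gfun p s \<pi> w = piext p \<pi> j"
proof -
  define j0 where "j0 = (LEAST j. sext p s j \<le> w)"
  have "sext p s (p + 1) \<le> w" using assms unfolding sext_def by simp
  then have j0: "sext p s j0 \<le> w" "j0 \<le> p + 1"
    unfolding j0_def by (auto intro: LeastI Least_le)
  have "j0 \<noteq> 0" using j0(1) assms unfolding sext_def by (cases "j0 = 0") auto
  then have above: "w < sext p s (j0 - 1)"
    using not_less_Least[of "j0 - 1" "\<lambda>j. sext p s j \<le> w"] unfolding j0_def by simp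
  have "(THE j. 1 \<le> j \<and> j \<le> p + 1 \<and> sext p s j \<le> w \<and> w < sext p s (j - 1)) = j0"
  proof (rule the_equality)
    fix j assume j: "1 \<le> j \<and> j \<le> p + 1 \<and> sext p s j \<le> w \<and> w < sext p s (j - 1)"
    have "\<not> j \<le> j0 - 1" using j above sext_antimono[of j "j0 - 1"] by linarith
    moreover have "\<not> j0 \<le> j - 1" using j j0 sext_antimono[of j0 "j - 1"] by linarith
    ultimately show "j = j0" using j \<open>j0 \<noteq> 0\<close> by linarith
  qed (use j0 above \<open>j0 \<noteq> 0\<close> in simp)
  then have "gfun p s \<pi> w = piext p \<pi> j0" using assms unfolding gfun_def by simp
  with that[of j0] show ?thesis using j0 \<open>j0 \<noteq> 0\<close> by simp
qed

lemma gfun_cases: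
  assumes "0 \<le> w" and "w \<le> 1"
  shows "gfun p s \<pi> w = 0 \<or> (\<exists>j\<in>{1..p}. s j \<le> w \<and> gfun p s \<pi> w = \<pi> j)"
proof -
  consider "w = 0" | "w = 1" | "0 < w \<and> w < 1" using assms by linarith
  then show ?thesis
  proof cases
    case 2
    then show ?thesis using p_pos sizes unfolding gfun_def by force
  next
    case 3
    then obtain j where "1 \<le> j" "j \<le> p + 1" "sext p s j \<le> w" "gfun p s \<pi> w = piext p \<pi> j"
      using gfun_interior by blast
    then show ?thesis unfolding piext_def sext_def by (cases "j \<le> p") auto
  qed (simp add: gfun_def)
qed

lemma dual_nonneg: "j \<in> {1..p} \<Longrightarrow> 0 \<le> \<pi> j"
  using feasible unfolding dual_feasible_def by blast

lemma gfun_nonneg: "0 \<le> w \<Longrightarrow> w \<le> 1 \<Longrightarrow> 0 \<le> gfun p s \<pi> w"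
  using gfun_cases dual_nonneg by fastforce

lemma sum_gfun_le_1:
  assumes "finite K" and "\<forall>i\<in>K. 0 \<le> w i \<and> w i \<le> 1" and "(\<Sum>i\<in>K. w i) \<le> 1"
  shows "(\<Sum>i\<in>K. gfun p s \<pi> (w i)) \<le> 1"
proof -
  define K' where "K' = {i\<in>K. gfun p s \<pi> (w i) \<noteq> 0}"
  have "finite K'" and "K' \<subseteq> K" using assms(1) unfolding K'_def by auto
  have "\<forall>i\<in>K'. \<exists>j\<in>{1..p}. s j \<le> w i \<and> gfun p s \<pi> (w i) = \<pi> j"
    using gfun_cases assms(2) unfolding K'_def by blast
  then obtain J where J: "\<forall>i\<in>K'. J i \<in> {1..p} \<and> s (J i) \<le> w i \<and> gfun p s \<pi> (w i) = \<pi> (J i)"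
    by metis
  then have classes: "J ` K' \<subseteq> {1..p}" by auto
  \<comment> \<open>Counting the items of each class gives a feasible pattern of the primal.\<close>
  define v where "v j = card {i\<in>K'. J i = j}" for j
  have "(\<Sum>j=1..p. real (v j) * s j) = (\<Sum>i\<in>K'. s (J i))"
    using sum_over_classes[OF \<open>finite K'\<close> finite_atLeastAtMost classes] unfolding v_def by simp
  also have "\<dots> \<le> (\<Sum>i\<in>K'. w i)" using J by (intro sum_mono) auto
  also have "\<dots> \<le> (\<Sum>i\<in>K. w i)" using \<open>K' \<subseteq> K\<close> assms(1,2) by (intro sum_mono2) auto
  finally have "(\<Sum>j=1..p. real (v j) * \<pi> j) \<le> 1"
    using feasible assms(3) unfolding dual_feasible_def by auto
  moreover have "(\<Sum>i\<in>K. gfun p s \<pi> (w i)) = (\<Sum>i\<in>K'. \<pi> (J i))"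
    using J \<open>K' \<subseteq> K\<close> assms(1) by (auto simp: K'_def intro: sum.mono_neutral_right)
  moreover have "(\<Sum>i\<in>K'. \<pi> (J i)) = (\<Sum>j=1..p. real (v j) * \<pi> j)"
    using sum_over_classes[OF \<open>finite K'\<close> finite_atLeastAtMost classes] unfolding v_def by simp
  ultimately show ?thesis by simp
qed

lemma layer_weight_le_Tk:
  fixes X Y l w :: "'i \<Rightarrow> real"
  assumes "2 \<le> k" and "finite J"
    and inside: "\<forall>i\<in>J. 0 \<le> X i \<and> 0 \<le> l i \<and> X i + l i \<le> 1 \<and> 0 \<le> Y i \<and> 0 \<le> w i \<and> Y i + w i \<le> 1"
    and separated: "\<forall>i\<in>J. \<forall>j\<in>J. i \<noteq> j \<longrightarrow>
      X i + l i \<le> X j \<or> X j + l j \<le> X i \<or> Y i + w i \<le> Y j \<or> Y j + w j \<le> Y i"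
  shows "(\<Sum>i\<in>J. fk k (l i) * gfun p s \<pi> (w i)) \<le> Tk k"
proof -
  have "(\<Sum>i\<in>J. gfun p s \<pi> (w i) * fk k ((X i + l i) - X i)) \<le> Tk k"
  proof (rule fractional_disjoint_intervals_bound[OF \<open>finite J\<close>, of 0 X "\<lambda>i. X i + l i" 1])
    show "\<forall>x. 0 < x \<longrightarrow> x < 1 \<longrightarrow> (\<Sum>i\<in>{i\<in>J. X i < x \<and> x < X i + l i}. gfun p s \<pi> (w i)) \<le> 1"
    proof (intro allI impI)
      fix x :: real
      define K where "K = {i\<in>J. X i < x \<and> x < X i + l i}"
      have "finite K" using \<open>finite J\<close> unfolding K_def by simp
      have "Y i + w i \<le> Y j \<or> Y j + w j \<le> Y i" if "i \<in> K" and "j \<in> K" and "i \<noteq> j" for i j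
      proof -
        have "X i < x" "x < X i + l i" "X j < x" "x < X j + l j" using that unfolding K_def by auto
        moreover have "X i + l i \<le> X j \<or> X j + l j \<le> X i \<or> Y i + w i \<le> Y j \<or> Y j + w j \<le> Y i"
          using separated that unfolding K_def by blast
        ultimately show ?thesis by argo
      qed
      then have "disjoint_intervals Y (\<lambda>i. Y i + w i) K" unfolding pairwise_def by blast
      then have "(\<Sum>i\<in>K. (Y i + w i) - Y i) \<le> 1 - 0"
        using inside \<open>finite K\<close> unfolding K_def by (intro disjoint_intervals_length_le) auto
      then show "(\<Sum>i\<in>K. gfun p s \<pi> (w i)) \<le> 1"
        using inside \<open>finite K\<close> unfolding K_def by (intro sum_gfun_le_1) auto
    qed
    show "sum (\<lambda>i. fk k ((X i + l i) - X i)) J' \<le> Tk k"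
      if "J' \<subseteq> J" and "disjoint_intervals X (\<lambda>i. X i + l i) J'" for J'
    proof -
      have "finite J'" using \<open>J' \<subseteq> J\<close> \<open>finite J\<close> by (rule finite_subset)
      moreover have "(\<Sum>i\<in>J'. (X i + l i) - X i) \<le> 1 - 0"
        using inside that \<open>finite J'\<close> by (intro disjoint_intervals_length_le) auto
      ultimately show ?thesis using sum_fk_le_Tk[OF \<open>2 \<le> k\<close>] inside that by auto
    qed
  qed (use inside gfun_nonneg in \<open>auto simp: fk_def\<close>)
  then show ?thesis by (simp add: mult.commute)
qed

lemma packing_weight_le:
  assumes "2 \<le> k" and boxes: "\<forall>R\<in>set L. unit_box R" and packing: "is_packing L pos"
    and below: "\<forall>i<length L. snd (snd (pos i)) + bhgt (L!i) \<le> H" and "0 \<le> H"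
  shows "Wt k p s \<pi> L \<le> Tk k * H"
proof -
  define n l w h X Y Z where "n = length L" and "l i = blen (L!i)" and "w i = bwid (L!i)"
    and "h i = bhgt (L!i)" and "X i = fst (pos i)" and "Y i = fst (snd (pos i))"
    and "Z i = snd (snd (pos i))" for i
  define c where "c i = fk k (l i) * gfun p s \<pi> (w i)" for i
  have box: "0 \<le> l i \<and> l i \<le> 1 \<and> 0 \<le> w i \<and> w i \<le> 1 \<and> 0 \<le> h i" if "i < n" for i
    using boxes nth_mem[OF that[unfolded n_def]] unfolding l_def w_def h_def by blast
  have inside: "0 \<le> X i \<and> X i + l i \<le> 1 \<and> 0 \<le> Y i \<and> Y i + w i \<le> 1 \<and> 0 \<le> Z i \<and> Z i + h i \<le> H"
    if "i < n" for i
    using packing below that unfolding is_packing_def n_def X_def Y_def Z_def l_def w_def h_def by blast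
  have separated: "X i + l i \<le> X j \<or> X j + l j \<le> X i \<or> Y i + w i \<le> Y j \<or> Y j + w j \<le> Y i \<or>
      Z i + h i \<le> Z j \<or> Z j + h j \<le> Z i" if "i < n" and "j < n" and "i \<noteq> j" for i j
    using packing that unfolding is_packing_def n_def X_def Y_def Z_def l_def w_def h_def by blast
  have layer: "(\<Sum>i\<in>{i\<in>{0..<n}. Z i < z \<and> z < Z i + h i}. c i) \<le> Tk k" for z
  proof -
    define J where "J = {i\<in>{0..<n}. Z i < z \<and> z < Z i + h i}"
    have "X i + l i \<le> X j \<or> X j + l j \<le> X i \<or> Y i + w i \<le> Y j \<or> Y j + w j \<le> Y i"
      if "i \<in> J" and "j \<in> J" and "i \<noteq> j" for i j
      using separated[of i j] that unfolding J_def by simp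
    then have "(\<Sum>i\<in>J. c i) \<le> Tk k"
      unfolding c_def using box inside
      by (intro layer_weight_le_Tk[where X = X and Y = Y and l = l and w = w, OF \<open>2 \<le> k\<close>])
        (auto simp: J_def)
    then show ?thesis unfolding J_def .
  qed
  have "(\<Sum>i\<in>{0..<n}. c i * ((Z i + h i) - Z i)) \<le> Tk k * (H - 0)"
    using box inside layer fk_nonneg[OF \<open>2 \<le> k\<close>] gfun_nonneg \<open>0 \<le> H\<close>
    by (intro weighted_length_le_max_load) (auto simp: c_def)
  moreover have "Wt k p s \<pi> L = (\<Sum>i\<in>{0..<n}. c i * h i)"
    unfolding Wt_def sum_list_sum_nth n_def c_def l_def w_def h_def by simp
  ultimately show ?thesis by simp
qed

end

lemma stacked_packing:
  assumes "\<forall>R\<in>set L. unit_box R"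
  shows "is_packing L (\<lambda>i. (0, 0, \<Sum>j<i. bhgt (L!j)))"
    and "\<forall>i<length L. (\<Sum>j<i. bhgt (L!j)) + bhgt (L!i) \<le> (\<Sum>j<length L. bhgt (L!j))"
proof -
  have h: "0 \<le> bhgt (L!j)" if "j < length L" for j using assms that by simp
  have below: "(\<Sum>j<i. bhgt (L!j)) + bhgt (L!i) \<le> (\<Sum>j<m. bhgt (L!j))" if "i < m" and "m \<le> length L" for i m
  proof -
    have "(\<Sum>j<i. bhgt (L!j)) + bhgt (L!i) = (\<Sum>j<Suc i. bhgt (L!j))" by simp
    also have "\<dots> \<le> (\<Sum>j<m. bhgt (L!j))" using that h by (intro sum_mono2) auto
    finally show ?thesis .
  qed
  show "\<forall>i<length L. (\<Sum>j<i. bhgt (L!j)) + bhgt (L!i) \<le> (\<Sum>j<length L. bhgt (L!j))"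
    using below by simp
  have "0 \<le> (\<Sum>j<i. bhgt (L!j))" if "i \<le> length L" for i using h that by (intro sum_nonneg) auto
  moreover have "(\<Sum>j<i. bhgt (L!j)) + bhgt (L!i) \<le> (\<Sum>j<i'. bhgt (L!j))"
    if "i < length L" "i' < length L" "i < i'" for i i' using below that by simp
  ultimately show "is_packing L (\<lambda>i. (0, 0, \<Sum>j<i. bhgt (L!j)))"
    using assms unfolding is_packing_def by (auto simp: nat_neq_iff)
qed

theorem lemma7:
  fixes k p :: nat and s \<pi> :: "nat \<Rightarrow> real" and L :: "box list"
  assumes "k \<ge> 2"
    and "p \<ge> 1"
    and "\<forall>j\<in>{1..p}. 0 < s j \<and> s j \<le> 1"
    and "\<forall>j\<in>{1..<p}. s (j+1) < s j"
    and "dual_feasible p s \<pi>"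
    and "\<forall>j\<in>{1..<p}. \<pi> (j+1) \<le> \<pi> j"
    and "\<forall>R\<in>set L. 0 \<le> blen R \<and> blen R \<le> 1 \<and> 0 \<le> bwid R \<and> bwid R \<le> 1 \<and> 0 \<le> bhgt R \<and> bhgt R \<le> 1"
  shows "Wt k p s \<pi> L \<le> Tk k * OPT L"
proof -
  interpret dual_solution p s \<pi> using assms(2-5) by unfold_locales
  define heights where "heights = {H. 0 \<le> H \<and> (\<exists>pos. is_packing L pos \<and>
      (\<forall>i<length L. snd (snd (pos i)) + bhgt (L!i) \<le> H))}"
  have "(\<Sum>j<length L. bhgt (L!j)) \<in> heights"
    using stacked_packing[OF assms(7)] assms(7) unfolding heights_def
    by (auto intro!: sum_nonneg exI[of _ "\<lambda>i. (0, 0, \<Sum>j<i. bhgt (L!j))"])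
  then have "heights \<noteq> {}" by blast
  moreover have "0 < Tk k" using Tk_ge_1[OF assms(1)] by simp
  moreover have "Wt k p s \<pi> L \<le> Tk k * H" if "H \<in> heights" for H
    using that packing_weight_le[OF assms(1,7)] unfolding heights_def by blast
  ultimately have "Wt k p s \<pi> L / Tk k \<le> Inf heights"
    by (intro cInf_greatest) (auto simp: pos_divide_le_eq mult.commute)
  then show ?thesis
    using \<open>0 < Tk k\<close> unfolding OPT_def heights_def[symmetric] by (simp add: pos_divide_le_eq mult.commute)
qed

end
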